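(* Let $q\ge1$ and assume Hypothesis (H$_q$). Then for every $\theta>0$, $$\Big|f\Big(\frac{m(a+b)}{2}\Big)-\frac{\Gamma(\theta+1)2^{\theta-1}}{m^\theta(b-a)^\theta}\Big[J^\theta_{(\frac{m(a+b)}{2})^-}f(ma)+J^\theta_{(\frac{m(a+b)}{2})^+}f(mb)\Big]\Big|$$ $$\le\frac{m(b-a)}{4}\cdot\frac{1}{\theta+1}\Big(\frac{1}{\alpha+\theta+1}\Big)^{\frac1q}\Big\{\Big[(\theta+1)\Big|f'\Big(\frac{m(a+b)}2\Big)\Big|^q+\alpha m|f'(a)|^q\Big]^{\frac1q}+\Big[(\theta+1)\Big|f'\Big(\frac{m(a+b)}2\Big)\Big|^q+\alpha m|f'(b)|^q\Big]^{\frac1q}\Big\}.$$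
   Context: Let $\Gamma$ denote Euler's Gamma function. For $\theta>0$, $c=\frac{m(a+b)}{2}$: $J^\theta_{c^-}f(ma)=\frac{1}{\Gamma(\theta)}\int_{ma}^{c}(s-ma)^{\theta-1}f(s)\,ds$ and $J^\theta_{c^+}f(mb)=\frac{1}{\Gamma(\theta)}\int_{c}^{mb}(mb-s)^{\theta-1}f(s)\,ds$. $(\alpha,m)$-convexity: for $(\alpha,m)\in[0,1]\times(0,1]$ and an interval $K\subseteq[0,\infty)$, a function $g:K\to\mathbb{R}$ is $(\alpha,m)$-convex on $K$ if $g(tX+m(1-t)Y)\le t^\alpha g(X)+m(1-t^\alpha)g(Y)$ for all $X,Y\in K$ and $t\in[0,1]$ with $tX+m(1-t)Y\in K$ (convention $0^0=1$). Hypothesis (H$_q$): $I\subseteq[0,\infty)$ is an interval, $f:I\to\mathbb{R}$ is differentiable on the interior $I^\circ$, $m\in(0,1]$, $\alpha\in[0,1]$, $a<b$ with $ma,b\in I^\circ$, $f'$ is Lebesgue integrable on $[ma,mb]$, and $|f'|^q$ is $(\alpha,m)$-convex on $[ma,b]$. *)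

theory Defs
  imports "HOL-Analysis.Analysis"
begin

definition rpow0 :: "real \<Rightarrow> real \<Rightarrow> real" where
  "rpow0 t \<alpha> = (if t = 0 then (if \<alpha> = 0 then 1 else 0) else t powr \<alpha>)"

definition alpha_m_convex_on :: "real \<Rightarrow> real \<Rightarrow> real set \<Rightarrow> (real \<Rightarrow> real) \<Rightarrow> bool" where
  "alpha_m_convex_on \<alpha> m K g \<longleftrightarrow>
     (\<forall>X\<in>K. \<forall>Y\<in>K. \<forall>t\<in>{0..1}. t * X + m * (1 - t) * Y \<in> K \<longrightarrow>
        g (t * X + m * (1 - t) * Y) \<le> rpow0 t \<alpha> * g X + m * (1 - rpow0 t \<alpha>) * g Y)"

definition RL_left :: "real \<Rightarrow> real \<Rightarrow> (real \<Rightarrow> real) \<Rightarrow> real \<Rightarrow> real" where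
  "RL_left \<theta> c f x = (1 / Gamma \<theta>) * (LINT s:{x..c}|lborel. (s - x) powr (\<theta> - 1) * f s)"

definition RL_right :: "real \<Rightarrow> real \<Rightarrow> (real \<Rightarrow> real) \<Rightarrow> real \<Rightarrow> real" where
  "RL_right \<theta> c f y = (1 / Gamma \<theta>) * (LINT s:{c..y}|lborel. (y - s) powr (\<theta> - 1) * f s)"

end

theory Submission
  imports Defs
begin

text \<open>Put \<open>c = m(a+b)/2\<close> and \<open>h = m(b-a)/2\<close>. Integrating by parts, \<open>\<Gamma>(\<theta>+1)\<close> times the
  left (right) Riemann--Liouville integral equals \<open>h\<^sup>\<theta> f(c)\<close> minus (plus) the integral of
  \<open>d(s)\<^sup>\<theta> f'(s)\<close> over the corresponding half, where \<open>d\<close> is the distance to the outer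
  endpoint \<open>ma\<close> (resp. \<open>mb\<close>). So the left-hand side is the difference of these two
  integrals divided by \<open>2h\<^sup>\<theta>\<close>. On each half, \<open>s\<close> lies on the segment from \<open>c\<close> to
  \<open>ma\<close> (resp. \<open>mb\<close>) with parameter \<open>d(s)/h\<close>, so \<open>(\<alpha>,m)\<close>-convexity bounds \<open>|f'(s)|\<^sup>q\<close> by
  an explicit profile in \<open>d(s)/h\<close>; the weighted power-mean inequality for the weight
  \<open>d\<^sup>\<theta>\<close> then bounds each integral by its total weight \<open>h powr (\<theta> + 1) / (\<theta> + 1)\<close> times the
  \<open>q\<close>-th root of the weighted mean of the profile, which is computed in closed form.\<close>

lemma powr_inverse_le_tangent:
  fixes x K q :: real
  assumes "0 \<le> x" "0 < K" "1 \<le> q"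
  shows "x powr (1/q) \<le> K powr (1/q) * (1 - 1/q) + (1/q) * K powr (1/q - 1) * x"
proof (cases "x = 0")
  case True
  then show ?thesis using assms by simp
next
  case False
  have young: "x powr (1/q) * K powr (1 - 1/q) \<le> (1/q) * x + (1 - 1/q) * K"
    by (rule Youngs_inequality_0) (use assms False in \<open>auto simp: field_simps\<close>)
  have inv: "K powr (1 - 1/q) * K powr (1/q - 1) = 1" and K: "K * K powr (1/q - 1) = K powr (1/q)"
    using assms by (simp_all add: powr_add[symmetric] powr_mult_base)
  have "x powr (1/q) = x powr (1/q) * K powr (1 - 1/q) * K powr (1/q - 1)"
    using inv by (simp add: mult.assoc)
  also have "\<dots> \<le> ((1/q) * x + (1 - 1/q) * K) * K powr (1/q - 1)"
    by (rule mult_right_mono[OF young]) simp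
  also have "\<dots> = K powr (1/q) * (1 - 1/q) + (1/q) * K powr (1/q - 1) * x"
    using K by (simp add: algebra_simps)
  finally show ?thesis .
qed

lemma integral_mult_le_powr_mean:
  fixes w g P :: "real \<Rightarrow> real" and S :: "real set"
  assumes q: "1 \<le> q" and W: "0 < W" and R: "0 \<le> R"
    and pointwise: "\<And>s. s \<in> S \<Longrightarrow> 0 \<le> g s \<and> 0 \<le> w s \<and> g s powr q \<le> P s"
    and w_int: "(w has_integral W) S" and wP_int: "((\<lambda>s. w s * P s) has_integral V) S"
    and V: "V \<le> W * R"
    and wg_int: "(\<lambda>s. w s * g s) integrable_on S"
  shows "integral S (\<lambda>s. w s * g s) \<le> W * R powr (1/q)"
proof -
  \<comment> \<open>\<open>t\<^sup>1\<^sup>/\<^sup>q\<close> lies below its tangent at every \<open>K > 0\<close>; take \<open>K = R\<close>, or let \<open>K \<rightarrow> 0\<close> if \<open>R = 0\<close>.\<close>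
  let ?X = "integral S (\<lambda>s. w s * g s)"
  have tangent: "?X \<le> W * K powr (1/q) * (1 - 1/q) + (1/q) * K powr (1/q - 1) * (W * R)"
    if K: "0 < K" for K
  proof -
    define A where "A = K powr (1/q) * (1 - 1/q)"
    define B where "B = (1/q) * K powr (1/q - 1)"
    have AB_int: "((\<lambda>s. A * w s + B * (w s * P s)) has_integral (A * W + B * V)) S"
      by (intro has_integral_add has_integral_mult_right w_int wP_int)
    have "?X \<le> integral S (\<lambda>s. A * w s + B * (w s * P s))"
    proof (rule integral_le[OF wg_int])
      show "(\<lambda>s. A * w s + B * (w s * P s)) integrable_on S"
        using AB_int by blast
      fix s assume s: "s \<in> S"
      have g: "0 \<le> g s" and w: "0 \<le> w s" and gP: "g s powr q \<le> P s"
        using pointwise[OF s] by auto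
      have "g s = (g s powr q) powr (1/q)"
        using g q by (simp add: powr_powr)
      also have "\<dots> \<le> P s powr (1/q)"
        using gP q by (intro powr_mono2) auto
      also have "\<dots> \<le> A + B * P s"
        unfolding A_def B_def by (rule powr_inverse_le_tangent[OF order_trans[OF _ gP] K q]) simp
      finally have "w s * g s \<le> w s * (A + B * P s)"
        using w by (rule mult_left_mono)
      then show "w s * g s \<le> A * w s + B * (w s * P s)"
        by (simp add: algebra_simps)
    qed
    also have "\<dots> = A * W + B * V"
      using AB_int by (rule integral_unique)
    also have "\<dots> \<le> A * W + B * (W * R)"
      using V q unfolding B_def by (intro add_left_mono mult_left_mono) auto
    finally show ?thesis
      unfolding A_def B_def by (simp add: algebra_simps)
  qed
  show ?thesis
  proof (cases "R = 0")
    case True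
    have "?X \<le> 0 + e" if e: "0 < e" for e
    proof -
      define K where "K = (e / (W + 1)) powr q"
      have root: "K powr (1/q) = e / (W + 1)"
        unfolding K_def using e W q by (simp add: powr_powr)
      have "?X \<le> W * (e / (W + 1)) * (1 - 1/q)"
        using tangent[of K] True root e W unfolding K_def by simp
      also have "\<dots> \<le> W * (e / (W + 1))"
        using e W q by (intro mult_left_le) auto
      also have "\<dots> \<le> e"
        using e W by (simp add: field_simps)
      finally show ?thesis by simp
    qed
    then show ?thesis
      using True by (simp add: field_le_epsilon)
  next
    case False
    then have "R powr (1/q - 1) * R = R powr (1/q)"
      using R by (simp add: powr_mult_base mult.commute)
    then have eq: "(1/q) * R powr (1/q - 1) * (W * R) = (1/q) * W * R powr (1/q)"
      by (metis mult.assoc mult.commute)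
    have "?X \<le> W * R powr (1/q) * (1 - 1/q) + (1/q) * W * R powr (1/q)"
      using tangent[of R] False R unfolding eq by simp
    also have "\<dots> = W * R powr (1/q)"
      by (simp add: algebra_simps)
    finally show ?thesis .
  qed
qed

lemma has_integral_powr_sub_left:
  fixes p c \<beta> :: real
  assumes "p < c" "-1 < \<beta>"
  shows "((\<lambda>s. (s - p) powr \<beta>) has_integral (c - p) powr (\<beta> + 1) / (\<beta> + 1)) {p..c}"
proof -
  define F where "F s = (s - p) powr (\<beta> + 1) / (\<beta> + 1)" for s
  have "((\<lambda>s. (s - p) powr \<beta>) has_integral (F c - F p)) {p..c}"
  proof (rule fundamental_theorem_of_calculus_interior)
    show "continuous_on {p..c} F"
      unfolding F_def using assms by (intro continuous_intros continuous_on_powr') auto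
    fix x assume "x \<in> {p<..<c}"
    then have "(F has_real_derivative (x - p) powr \<beta>) (at x)"
      unfolding F_def using assms by (auto intro!: derivative_eq_intros)
    then show "(F has_vector_derivative (x - p) powr \<beta>) (at x)"
      by (simp add: has_real_derivative_iff_has_vector_derivative)
  qed (use assms in simp)
  then show ?thesis
    using assms by (simp add: F_def)
qed

lemma has_integral_powr_sub_right:
  fixes y c \<beta> :: real
  assumes "c < y" "-1 < \<beta>"
  shows "((\<lambda>s. (y - s) powr \<beta>) has_integral (y - c) powr (\<beta> + 1) / (\<beta> + 1)) {c..y}"
proof -
  define F where "F s = - ((y - s) powr (\<beta> + 1) / (\<beta> + 1))" for s
  have "((\<lambda>s. (y - s) powr \<beta>) has_integral (F y - F c)) {c..y}"
  proof (rule fundamental_theorem_of_calculus_interior)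
    show "continuous_on {c..y} F"
      unfolding F_def using assms by (intro continuous_intros continuous_on_powr') auto
    fix x assume "x \<in> {c<..<y}"
    then have "(F has_real_derivative (y - x) powr \<beta>) (at x)"
      unfolding F_def using assms by (auto intro!: derivative_eq_intros)
    then show "(F has_vector_derivative (y - x) powr \<beta>) (at x)"
      by (simp add: has_real_derivative_iff_has_vector_derivative)
  qed (use assms in simp)
  then show ?thesis
    using assms by (simp add: F_def)
qed

lemma absolutely_integrable_continuous_mult:
  fixes w g :: "real \<Rightarrow> real"
  assumes "continuous_on {u..v} w" "g absolutely_integrable_on {u..v}"
  shows "(\<lambda>x. w x * g x) absolutely_integrable_on {u..v}"
  by (rule absolutely_integrable_bounded_measurable_product_real)
    (use assms in \<open>auto intro: continuous_imp_measurable_on_sets_lebesgue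
                        compact_imp_bounded compact_continuous_image\<close>)

lemma set_integrable_mult_continuous:
  fixes g f :: "real \<Rightarrow> real"
  assumes g_meas: "g \<in> borel_measurable borel" and g_int: "g absolutely_integrable_on {u..v}"
    and f_cont: "continuous_on {u..v} f"
  shows "set_integrable lborel {u..v} (\<lambda>x. g x * f x)"
proof -
  have "(\<lambda>x. f x * g x) absolutely_integrable_on {u..v}"
    by (rule absolutely_integrable_continuous_mult[OF f_cont g_int])
  then have "integrable lebesgue (\<lambda>x. indicat_real {u..v} x *\<^sub>R (g x * f x))"
    unfolding set_integrable_def by (simp add: mult.commute)
  moreover have "(\<lambda>x. g x * (indicat_real {u..v} x *\<^sub>R f x)) \<in> borel_measurable borel"
    using borel_measurable_continuous_on_indicator[OF _ f_cont] g_meas by measurable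
  ultimately show ?thesis
    unfolding set_integrable_def by (subst (asm) integrable_completion) (auto simp: mult_ac)
qed

lemma has_integral_by_parts_weighted:
  fixes w w' f f' :: "real \<Rightarrow> real"
  assumes "u \<le> v" and w_cont: "continuous_on {u..v} w"
    and w_deriv: "\<And>x. x \<in> {u<..<v} \<Longrightarrow> (w has_real_derivative w' x) (at x)"
    and f_deriv: "\<And>x. x \<in> {u..v} \<Longrightarrow> (f has_real_derivative f' x) (at x)"
    and wf'_int: "(\<lambda>x. w x * f' x) integrable_on {u..v}"
  shows "((\<lambda>x. w' x * f x) has_integral
           w v * f v - w u * f u - integral {u..v} (\<lambda>x. w x * f' x)) {u..v}"
proof (rule integration_by_parts_interior[OF bounded_bilinear_mult \<open>u \<le> v\<close> w_cont])
  show "continuous_on {u..v} f"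
    using f_deriv by (meson DERIV_isCont continuous_at_imp_continuous_on)
  show "(w has_vector_derivative w' x) (at x)" if "x \<in> {u<..<v}" for x
    using w_deriv[OF that] by (simp add: has_real_derivative_iff_has_vector_derivative)
  show "(f has_vector_derivative f' x) (at x)" if "x \<in> {u<..<v}" for x
    using f_deriv that by (simp add: has_real_derivative_iff_has_vector_derivative)
  show "((\<lambda>x. w x * f' x) has_integral
          w v * f v - w u * f u - (w v * f v - w u * f u - integral {u..v} (\<lambda>x. w x * f' x))) {u..v}"
    using wf'_int by (simp add: integrable_integral)
qed

lemma RL_left_by_parts:
  fixes f f' :: "real \<Rightarrow> real"
  assumes pc: "p < c" and \<theta>: "0 < \<theta>"
    and deriv: "\<And>x. x \<in> {p..c} \<Longrightarrow> (f has_real_derivative f' x) (at x)"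
    and f'_int: "f' absolutely_integrable_on {p..c}"
  shows "Gamma (\<theta> + 1) * RL_left \<theta> c f p
           = (c - p) powr \<theta> * f c - integral {p..c} (\<lambda>s. (s - p) powr \<theta> * f' s)"
proof -
  have f_cont: "continuous_on {p..c} f"
    using deriv by (meson DERIV_isCont continuous_at_imp_continuous_on)
  have w_cont: "continuous_on {p..c} (\<lambda>s. (s - p) powr \<theta>)"
    using \<theta> by (intro continuous_intros continuous_on_powr') auto
  have "((\<lambda>s. (s - p) powr (\<theta> - 1)) has_integral (c - p) powr \<theta> / \<theta>) {p..c}"
    using has_integral_powr_sub_left[OF pc, of "\<theta> - 1"] \<theta> by simp
  then have "(\<lambda>s. (s - p) powr (\<theta> - 1)) absolutely_integrable_on {p..c}"
    by (subst absolutely_integrable_on_iff_nonneg) auto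
  then have "set_integrable lborel {p..c} (\<lambda>s. (s - p) powr (\<theta> - 1) * f s)"
    by (intro set_integrable_mult_continuous[OF _ _ f_cont]) measurable
  then have RL: "RL_left \<theta> c f p = integral {p..c} (\<lambda>s. (s - p) powr (\<theta> - 1) * f s) / Gamma \<theta>"
    unfolding RL_left_def by (simp add: set_borel_integral_eq_integral)
  have parts: "((\<lambda>s. \<theta> * ((s - p) powr (\<theta> - 1) * f s)) has_integral
          (c - p) powr \<theta> * f c - integral {p..c} (\<lambda>s. (s - p) powr \<theta> * f' s)) {p..c}"
  proof -
    have wf'_int: "(\<lambda>s. (s - p) powr \<theta> * f' s) integrable_on {p..c}"
      using absolutely_integrable_continuous_mult[OF w_cont f'_int]
      by (rule set_lebesgue_integral_eq_integral(1))
    have "((\<lambda>s. \<theta> * (s - p) powr (\<theta> - 1) * f s) has_integral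
          (c - p) powr \<theta> * f c - (p - p) powr \<theta> * f p - integral {p..c} (\<lambda>s. (s - p) powr \<theta> * f' s)) {p..c}"
      by (rule has_integral_by_parts_weighted[OF less_imp_le[OF pc] w_cont _ deriv wf'_int])
        (auto intro!: derivative_eq_intros)
    then show ?thesis
      using \<theta> by (simp add: mult.assoc)
  qed
  have "\<theta> * integral {p..c} (\<lambda>s. (s - p) powr (\<theta> - 1) * f s)
               = (c - p) powr \<theta> * f c - integral {p..c} (\<lambda>s. (s - p) powr \<theta> * f' s)"
    using integral_unique[OF parts] by simp
  moreover have "Gamma (\<theta> + 1) = \<theta> * Gamma \<theta>"
    using \<theta> by (auto intro!: Gamma_plus1 dest: nonpos_Ints_nonpos)
  moreover have "Gamma \<theta> > 0"
    using \<theta> by (rule Gamma_real_pos)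
  ultimately show ?thesis
    unfolding RL by simp
qed

lemma RL_right_by_parts:
  fixes f f' :: "real \<Rightarrow> real"
  assumes cy: "c < y" and \<theta>: "0 < \<theta>"
    and deriv: "\<And>x. x \<in> {c..y} \<Longrightarrow> (f has_real_derivative f' x) (at x)"
    and f'_int: "f' absolutely_integrable_on {c..y}"
  shows "Gamma (\<theta> + 1) * RL_right \<theta> c f y
           = (y - c) powr \<theta> * f c + integral {c..y} (\<lambda>s. (y - s) powr \<theta> * f' s)"
proof -
  have f_cont: "continuous_on {c..y} f"
    using deriv by (meson DERIV_isCont continuous_at_imp_continuous_on)
  have w_cont: "continuous_on {c..y} (\<lambda>s. (y - s) powr \<theta>)"
    using \<theta> by (intro continuous_intros continuous_on_powr') auto
  have "((\<lambda>s. (y - s) powr (\<theta> - 1)) has_integral (y - c) powr \<theta> / \<theta>) {c..y}"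
    using has_integral_powr_sub_right[OF cy, of "\<theta> - 1"] \<theta> by simp
  then have "(\<lambda>s. (y - s) powr (\<theta> - 1)) absolutely_integrable_on {c..y}"
    by (subst absolutely_integrable_on_iff_nonneg) auto
  then have "set_integrable lborel {c..y} (\<lambda>s. (y - s) powr (\<theta> - 1) * f s)"
    by (intro set_integrable_mult_continuous[OF _ _ f_cont]) measurable
  then have RL: "RL_right \<theta> c f y = integral {c..y} (\<lambda>s. (y - s) powr (\<theta> - 1) * f s) / Gamma \<theta>"
    unfolding RL_right_def by (simp add: set_borel_integral_eq_integral)
  have parts: "((\<lambda>s. \<theta> * ((y - s) powr (\<theta> - 1) * f s)) has_integral
          (y - c) powr \<theta> * f c + integral {c..y} (\<lambda>s. (y - s) powr \<theta> * f' s)) {c..y}"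
  proof -
    have wf'_int: "(\<lambda>s. (y - s) powr \<theta> * f' s) integrable_on {c..y}"
      using absolutely_integrable_continuous_mult[OF w_cont f'_int]
      by (rule set_lebesgue_integral_eq_integral(1))
    have "((\<lambda>s. - \<theta> * (y - s) powr (\<theta> - 1) * f s) has_integral
          (y - y) powr \<theta> * f y - (y - c) powr \<theta> * f c - integral {c..y} (\<lambda>s. (y - s) powr \<theta> * f' s)) {c..y}"
      by (rule has_integral_by_parts_weighted[OF less_imp_le[OF cy] w_cont _ deriv wf'_int])
        (auto intro!: derivative_eq_intros)
    from has_integral_neg[OF this] show ?thesis
      using \<theta> by (simp add: mult.assoc add.commute)
  qed
  have "\<theta> * integral {c..y} (\<lambda>s. (y - s) powr (\<theta> - 1) * f s)
               = (y - c) powr \<theta> * f c + integral {c..y} (\<lambda>s. (y - s) powr \<theta> * f' s)"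
    using integral_unique[OF parts] by simp
  moreover have "Gamma (\<theta> + 1) = \<theta> * Gamma \<theta>"
    using \<theta> by (auto intro!: Gamma_plus1 dest: nonpos_Ints_nonpos)
  moreover have "Gamma \<theta> > 0"
    using \<theta> by (rule Gamma_real_pos)
  ultimately show ?thesis
    unfolding RL by simp
qed

lemma has_integral_powr_mult_profile:
  fixes d :: "real \<Rightarrow> real" and S :: "real set"
  assumes h: "0 < h" and \<theta>: "0 < \<theta>" and \<alpha>: "0 \<le> \<alpha>"
    and d_int: "\<And>\<beta>. -1 < \<beta> \<Longrightarrow> ((\<lambda>s. d s powr \<beta>) has_integral h powr (\<beta> + 1) / (\<beta> + 1)) S"
    and d_nonneg: "\<And>s. s \<in> S \<Longrightarrow> 0 \<le> d s"
  shows "((\<lambda>s. d s powr \<theta> * (rpow0 (d s / h) \<alpha> * A + m * (1 - rpow0 (d s / h) \<alpha>) * B))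
           has_integral h powr (\<theta> + 1) / (\<theta> + 1) * (((\<theta> + 1) * A + \<alpha> * m * B) / (\<alpha> + \<theta> + 1))) S"
proof -
  define H where "H = h powr \<alpha>"
  have H: "0 < H" and pow: "h powr (\<theta> + \<alpha> + 1) = h powr (\<theta> + 1) * H"
    unfolding H_def using h by (simp_all add: powr_add[symmetric] add_ac)
  \<comment> \<open>Where \<open>d s = 0\<close> the convention \<open>0\<^sup>0 = 1\<close> of \<open>rpow0\<close> is harmless, as \<open>d s powr \<theta> = 0\<close>.\<close>
  have weight: "d s powr \<theta> * rpow0 (d s / h) \<alpha> = d s powr (\<theta> + \<alpha>) / H" if "s \<in> S" for s
  proof (cases "d s = 0")
    case True
    then show ?thesis by (simp add: rpow0_def)
  next
    case False
    then show ?thesis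
      using d_nonneg[OF that] h by (simp add: rpow0_def H_def powr_divide powr_add)
  qed
  have "((\<lambda>s. A * (d s powr (\<theta> + \<alpha>) / H) + m * B * (d s powr \<theta> - d s powr (\<theta> + \<alpha>) / H))
       has_integral A * (h powr (\<theta> + \<alpha> + 1) / (\<theta> + \<alpha> + 1) / H)
          + m * B * (h powr (\<theta> + 1) / (\<theta> + 1) - h powr (\<theta> + \<alpha> + 1) / (\<theta> + \<alpha> + 1) / H)) S"
    using \<theta> \<alpha> by (intro has_integral_add has_integral_mult_right has_integral_diff has_integral_divide d_int) auto
  also have "A * (h powr (\<theta> + \<alpha> + 1) / (\<theta> + \<alpha> + 1) / H)
          + m * B * (h powr (\<theta> + 1) / (\<theta> + 1) - h powr (\<theta> + \<alpha> + 1) / (\<theta> + \<alpha> + 1) / H)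
        = h powr (\<theta> + 1) / (\<theta> + 1) * (((\<theta> + 1) * A + \<alpha> * m * B) / (\<alpha> + \<theta> + 1))"
  proof -
    have gen: "A * (X / v) + m * B * (X / u - X / v) = X / u * ((u * A + (v - u) * m * B) / v)"
      if "0 < u" "0 < v" for X u v :: real
      using that by (simp add: field_simps)
    have "h powr (\<theta> + \<alpha> + 1) / (\<theta> + \<alpha> + 1) / H = h powr (\<theta> + 1) / (\<theta> + \<alpha> + 1)"
      unfolding pow using H by simp
    then show ?thesis
      using gen[of "\<theta> + 1" "\<theta> + \<alpha> + 1" "h powr (\<theta> + 1)"] \<theta> \<alpha> by (simp add: add_ac)
  qed
  finally show ?thesis
    by (rule has_integral_eq[rotated]) (simp add: weight algebra_simps)
qed

lemma abs_integral_powr_mult_le: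
  fixes g d :: "real \<Rightarrow> real" and S :: "real set"
  assumes q: "1 \<le> q" and h: "0 < h" and \<theta>: "0 < \<theta>" and \<alpha>: "0 \<le> \<alpha>"
    and A: "0 \<le> A" and B: "0 \<le> B" and m: "0 < m"
    and d_int: "\<And>\<beta>. -1 < \<beta> \<Longrightarrow> ((\<lambda>s. d s powr \<beta>) has_integral h powr (\<beta> + 1) / (\<beta> + 1)) S"
    and d_nonneg: "\<And>s. s \<in> S \<Longrightarrow> 0 \<le> d s"
    and g_le: "\<And>s. s \<in> S \<Longrightarrow> \<bar>g s\<bar> powr q \<le> rpow0 (d s / h) \<alpha> * A + m * (1 - rpow0 (d s / h) \<alpha>) * B"
    and dg_int: "(\<lambda>s. d s powr \<theta> * g s) absolutely_integrable_on S"
  shows "\<bar>integral S (\<lambda>s. d s powr \<theta> * g s)\<bar>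
           \<le> h powr (\<theta> + 1) / (\<theta> + 1) * (1 / (\<alpha> + \<theta> + 1)) powr (1/q)
              * ((\<theta> + 1) * A + \<alpha> * m * B) powr (1/q)"
proof -
  have "(\<lambda>s. norm (d s powr \<theta> * g s)) absolutely_integrable_on S"
    using absolutely_integrable_norm[OF dg_int] by (simp add: o_def)
  then have abs_int: "(\<lambda>s. d s powr \<theta> * \<bar>g s\<bar>) integrable_on S"
    using set_lebesgue_integral_eq_integral(1) by (fastforce simp: abs_mult)
  have "\<bar>integral S (\<lambda>s. d s powr \<theta> * g s)\<bar> \<le> integral S (\<lambda>s. d s powr \<theta> * \<bar>g s\<bar>)"
    using integral_norm_bound_integral[OF set_lebesgue_integral_eq_integral(1)[OF dg_int] abs_int]
    by (simp add: abs_mult)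
  also have "\<dots> \<le> h powr (\<theta> + 1) / (\<theta> + 1) * (((\<theta> + 1) * A + \<alpha> * m * B) / (\<alpha> + \<theta> + 1)) powr (1/q)"
  proof (rule integral_mult_le_powr_mean[OF q _ _ _ _ has_integral_powr_mult_profile[OF h \<theta> \<alpha> d_int d_nonneg] order_refl abs_int])
    show "0 < h powr (\<theta> + 1) / (\<theta> + 1)"
      using h \<theta> by simp
    show "0 \<le> ((\<theta> + 1) * A + \<alpha> * m * B) / (\<alpha> + \<theta> + 1)"
      using \<theta> \<alpha> A B m by simp
    show "((\<lambda>s. d s powr \<theta>) has_integral h powr (\<theta> + 1) / (\<theta> + 1)) S"
      using d_int \<theta> by simp
  qed (use g_le in auto)
  also have "\<dots> = h powr (\<theta> + 1) / (\<theta> + 1) * (1 / (\<alpha> + \<theta> + 1)) powr (1/q)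
                     * ((\<theta> + 1) * A + \<alpha> * m * B) powr (1/q)"
    using \<theta> \<alpha> A B m by (simp add: powr_divide)
  finally show ?thesis .
qed

lemma alpha_m_convex_on_le_segment:
  fixes g :: "real \<Rightarrow> real"
  assumes conv: "alpha_m_convex_on \<alpha> m K g" and XYs: "X \<in> K" "Y \<in> K" "s \<in> K"
    and seg: "s \<in> closed_segment X (m * Y)" and ne: "X \<noteq> m * Y"
  shows "g s \<le> rpow0 ((s - m * Y) / (X - m * Y)) \<alpha> * g X
                + m * (1 - rpow0 ((s - m * Y) / (X - m * Y)) \<alpha>) * g Y"
proof -
  obtain u where u: "0 \<le> u" "u \<le> 1" and s: "s = (1 - u) * X + u * (m * Y)"
    using seg by (auto simp: in_segment)
  define t where "t = (s - m * Y) / (X - m * Y)"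
  have t: "t = 1 - u"
    unfolding t_def s using ne by (simp add: field_simps)
  have st: "t * X + m * (1 - t) * Y = s"
    unfolding s t by (simp add: algebra_simps)
  have "t \<in> {0..1}"
    using u t by simp
  with conv XYs(1,2) have "t * X + m * (1 - t) * Y \<in> K
      \<longrightarrow> g (t * X + m * (1 - t) * Y) \<le> rpow0 t \<alpha> * g X + m * (1 - rpow0 t \<alpha>) * g Y"
    unfolding alpha_m_convex_on_def by blast
  then have "g s \<le> rpow0 t \<alpha> * g X + m * (1 - rpow0 t \<alpha>) * g Y"
    using XYs(3) unfolding st by blast
  then show ?thesis
    unfolding t_def .
qed

lemma midpoint_RL_eq:
  fixes f f' :: "real \<Rightarrow> real" and p y :: real
  defines "c \<equiv> (p + y) / 2" and "h \<equiv> (y - p) / 2"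
  assumes py: "p < y" and \<theta>: "0 < \<theta>"
    and deriv: "\<And>x. x \<in> {p..y} \<Longrightarrow> (f has_real_derivative f' x) (at x)"
    and f'_int: "f' absolutely_integrable_on {p..y}"
  shows "f c - Gamma (\<theta> + 1) * 2 powr (\<theta> - 1) / (y - p) powr \<theta> * (RL_left \<theta> c f p + RL_right \<theta> c f y)
           = (integral {p..c} (\<lambda>s. (s - p) powr \<theta> * f' s) - integral {c..y} (\<lambda>s. (y - s) powr \<theta> * f' s))
             / (2 * h powr \<theta>)"
proof -
  have pc: "p < c" and cy: "c < y" and h: "0 < h" and hc: "c - p = h" and hy: "y - c = h"
    using py unfolding c_def h_def by (auto simp: field_simps)
  have f'_int_left: "f' absolutely_integrable_on {p..c}"
    and f'_int_right: "f' absolutely_integrable_on {c..y}"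
    using pc cy by (auto intro: absolutely_integrable_on_subinterval[OF f'_int])
  define IL where "IL = integral {p..c} (\<lambda>s. (s - p) powr \<theta> * f' s)"
  define IR where "IR = integral {c..y} (\<lambda>s. (y - s) powr \<theta> * f' s)"
  have "Gamma (\<theta> + 1) * RL_left \<theta> c f p = h powr \<theta> * f c - IL"
    using RL_left_by_parts[OF pc \<theta> _ f'_int_left] deriv cy unfolding IL_def hc by simp
  moreover have "Gamma (\<theta> + 1) * RL_right \<theta> c f y = h powr \<theta> * f c + IR"
    using RL_right_by_parts[OF cy \<theta> _ f'_int_right] deriv pc unfolding IR_def hy by simp
  ultimately have sum: "Gamma (\<theta> + 1) * (RL_left \<theta> c f p + RL_right \<theta> c f y) = 2 * h powr \<theta> * f c - (IL - IR)"
    by (simp add: algebra_simps)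
  have "y - p = 2 * h"
    unfolding h_def by simp
  then have "(y - p) powr \<theta> = 2 powr \<theta> * h powr \<theta>"
    using h by (simp add: powr_mult)
  then have "Gamma (\<theta> + 1) * 2 powr (\<theta> - 1) / (y - p) powr \<theta> * (RL_left \<theta> c f p + RL_right \<theta> c f y)
      = Gamma (\<theta> + 1) * (RL_left \<theta> c f p + RL_right \<theta> c f y) / (2 * h powr \<theta>)"
    by (simp add: powr_diff)
  also have "\<dots> = f c - (IL - IR) / (2 * h powr \<theta>)"
    unfolding sum using h by (simp add: diff_divide_distrib)
  finally show ?thesis
    unfolding IL_def IR_def by simp
qed

lemma abs_midpoint_RL_le:
  fixes f f' :: "real \<Rightarrow> real" and p y :: real
  defines "c \<equiv> (p + y) / 2" and "h \<equiv> (y - p) / 2"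
  assumes py: "p < y" and \<theta>: "0 < \<theta>" and q: "1 \<le> q" and \<alpha>: "0 \<le> \<alpha>" and m: "0 < m"
    and A: "0 \<le> A" and Bl: "0 \<le> Bl" and Br: "0 \<le> Br"
    and deriv: "\<And>x. x \<in> {p..y} \<Longrightarrow> (f has_real_derivative f' x) (at x)"
    and f'_int: "f' absolutely_integrable_on {p..y}"
    and left: "\<And>s. s \<in> {p..c} \<Longrightarrow>
      \<bar>f' s\<bar> powr q \<le> rpow0 ((s - p) / h) \<alpha> * A + m * (1 - rpow0 ((s - p) / h) \<alpha>) * Bl"
    and right: "\<And>s. s \<in> {c..y} \<Longrightarrow>
      \<bar>f' s\<bar> powr q \<le> rpow0 ((y - s) / h) \<alpha> * A + m * (1 - rpow0 ((y - s) / h) \<alpha>) * Br"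
  shows "\<bar>f c - Gamma (\<theta> + 1) * 2 powr (\<theta> - 1) / (y - p) powr \<theta> * (RL_left \<theta> c f p + RL_right \<theta> c f y)\<bar>
    \<le> (y - p) / 4 * (1 / (\<theta> + 1)) * (1 / (\<alpha> + \<theta> + 1)) powr (1 / q)
       * (((\<theta> + 1) * A + \<alpha> * m * Bl) powr (1 / q) + ((\<theta> + 1) * A + \<alpha> * m * Br) powr (1 / q))"
proof -
  have pc: "p < c" and cy: "c < y" and h: "0 < h" and hc: "c - p = h" and hy: "y - c = h"
    using py unfolding c_def h_def by (auto simp: field_simps)
  define IL where "IL = integral {p..c} (\<lambda>s. (s - p) powr \<theta> * f' s)"
  define IR where "IR = integral {c..y} (\<lambda>s. (y - s) powr \<theta> * f' s)"
  define Z where "Z = (1 / (\<alpha> + \<theta> + 1)) powr (1 / q)"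
  define Sl where "Sl = ((\<theta> + 1) * A + \<alpha> * m * Bl) powr (1 / q)"
  define Sr where "Sr = ((\<theta> + 1) * A + \<alpha> * m * Br) powr (1 / q)"
  define K where "K = h powr (\<theta> + 1) / (\<theta> + 1) * Z"
  have IL_le: "\<bar>IL\<bar> \<le> K * Sl"
    unfolding IL_def K_def Z_def Sl_def
  proof (rule abs_integral_powr_mult_le[OF q h \<theta> \<alpha> A Bl m _ _ left])
    show "((\<lambda>s. (s - p) powr \<beta>) has_integral h powr (\<beta> + 1) / (\<beta> + 1)) {p..c}" if "-1 < \<beta>" for \<beta>
      using has_integral_powr_sub_left[OF pc that] unfolding hc .
    show "(\<lambda>s. (s - p) powr \<theta> * f' s) absolutely_integrable_on {p..c}"
      using \<theta> cy by (intro absolutely_integrable_continuous_mult continuous_intros continuous_on_powr'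
          absolutely_integrable_on_subinterval[OF f'_int]) auto
  qed auto
  have IR_le: "\<bar>IR\<bar> \<le> K * Sr"
    unfolding IR_def K_def Z_def Sr_def
  proof (rule abs_integral_powr_mult_le[OF q h \<theta> \<alpha> A Br m _ _ right])
    show "((\<lambda>s. (y - s) powr \<beta>) has_integral h powr (\<beta> + 1) / (\<beta> + 1)) {c..y}" if "-1 < \<beta>" for \<beta>
      using has_integral_powr_sub_right[OF cy that] unfolding hy .
    show "(\<lambda>s. (y - s) powr \<theta> * f' s) absolutely_integrable_on {c..y}"
      using \<theta> pc by (intro absolutely_integrable_continuous_mult continuous_intros continuous_on_powr'
          absolutely_integrable_on_subinterval[OF f'_int]) auto
  qed auto
  have "\<bar>(IL - IR) / (2 * h powr \<theta>)\<bar> \<le> (\<bar>IL\<bar> + \<bar>IR\<bar>) / (2 * h powr \<theta>)"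
    using h by (simp add: divide_right_mono abs_triangle_ineq4)
  also have "\<dots> \<le> (K * Sl + K * Sr) / (2 * h powr \<theta>)"
    using IL_le IR_le h by (intro divide_right_mono add_mono) auto
  also have "\<dots> = (y - p) / 4 * (1 / (\<theta> + 1)) * Z * (Sl + Sr)"
  proof -
    have gen: "(H * h / T * Z * Sl + H * h / T * Z * Sr) / (2 * H) = (2 * h) / 4 * (1 / T) * Z * (Sl + Sr)"
      if "0 < H" "0 < T" for H T :: real
      using that by (simp add: field_simps)
    have "h powr (\<theta> + 1) = h powr \<theta> * h" and "y - p = 2 * h"
      using h unfolding h_def by (simp_all add: powr_add)
    then show ?thesis
      unfolding K_def using gen[of "h powr \<theta>" "\<theta> + 1"] h \<theta> by simp
  qed
  finally have "\<bar>(IL - IR) / (2 * h powr \<theta>)\<bar> \<le> (y - p) / 4 * (1 / (\<theta> + 1)) * Z * (Sl + Sr)" .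
  moreover have "f c - Gamma (\<theta> + 1) * 2 powr (\<theta> - 1) / (y - p) powr \<theta> * (RL_left \<theta> c f p + RL_right \<theta> c f y)
      = (IL - IR) / (2 * h powr \<theta>)"
    unfolding c_def h_def IL_def IR_def by (rule midpoint_RL_eq[OF py \<theta> deriv f'_int])
  ultimately show ?thesis
    unfolding Z_def Sl_def Sr_def by simp
qed

lemma alpha_m_convex_on_midpoint_bounds:
  fixes g :: "real \<Rightarrow> real" and m a b :: real
  defines "c \<equiv> (m * a + m * b) / 2" and "h \<equiv> (m * b - m * a) / 2"
  assumes conv: "alpha_m_convex_on \<alpha> m {m * a..b} g" and m: "0 < m" "m \<le> 1"
    and a: "0 \<le> a" and ab: "a < b"
  shows "\<And>s. s \<in> {m * a..c} \<Longrightarrow>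
           g s \<le> rpow0 ((s - m * a) / h) \<alpha> * g c + m * (1 - rpow0 ((s - m * a) / h) \<alpha>) * g a"
    and "\<And>s. s \<in> {c..m * b} \<Longrightarrow>
           g s \<le> rpow0 ((m * b - s) / h) \<alpha> * g c + m * (1 - rpow0 ((m * b - s) / h) \<alpha>) * g b"
proof -
  have c: "m * a < c" "c < m * b" "c - m * a = h" "m * b - c = h"
    using m ab unfolding c_def h_def by (auto simp: field_simps)
  have "m * a \<le> a" "m * b \<le> b"
    using m a ab by (simp_all add: mult_left_le_one_le)
  then have in_K: "{m * a..m * b} \<subseteq> {m * a..b}" "a \<in> {m * a..b}" "b \<in> {m * a..b}"
    using ab by auto
  then have c_in: "c \<in> {m * a..b}" and c_ne: "c \<noteq> m * a" "c \<noteq> m * b"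
    using c by auto
  show "g s \<le> rpow0 ((s - m * a) / h) \<alpha> * g c + m * (1 - rpow0 ((s - m * a) / h) \<alpha>) * g a"
    if s: "s \<in> {m * a..c}" for s
  proof -
    have "s \<in> closed_segment c (m * a)" "s \<in> {m * a..b}"
      using s c in_K(1) by (auto simp: closed_segment_eq_real_ivl)
    from alpha_m_convex_on_le_segment[OF conv c_in in_K(2) this(2,1) c_ne(1)]
    show ?thesis
      unfolding c(3) .
  qed
  show "g s \<le> rpow0 ((m * b - s) / h) \<alpha> * g c + m * (1 - rpow0 ((m * b - s) / h) \<alpha>) * g b"
    if s: "s \<in> {c..m * b}" for s
  proof -
    have seg: "s \<in> closed_segment c (m * b)" and s_in: "s \<in> {m * a..b}"
      using s c in_K(1) by (auto simp: closed_segment_eq_real_ivl)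
    have "(s - m * b) / (c - m * b) = (m * b - s) / h"
      by (metis c(4) minus_diff_eq minus_divide_divide)
    with alpha_m_convex_on_le_segment[OF conv c_in in_K(3) s_in seg c_ne(2)]
    show ?thesis
      by simp
  qed
qed

lemma set_integrable_lborel_imp_absolutely_integrable:
  fixes f :: "real \<Rightarrow> real"
  assumes "set_integrable lborel S f"
  shows "f absolutely_integrable_on S"
  using assms unfolding set_integrable_def
  by (subst integrable_completion) (auto dest: borel_measurable_integrable)

theorem mainTheorem6:
  fixes f f' :: "real \<Rightarrow> real" and I :: "real set"
    and m \<alpha> a b q \<theta> :: real
  assumes q: "q \<ge> 1"
    and I_int: "is_interval I" and I_nonneg: "I \<subseteq> {0..}"
    and deriv: "\<And>x. x \<in> interior I \<Longrightarrow> (f has_real_derivative f' x) (at x)"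
    and m: "0 < m" "m \<le> 1"
    and \<alpha>: "0 \<le> \<alpha>" "\<alpha> \<le> 1"
    and ab: "a < b"
    and ma_in: "m * a \<in> interior I" and b_in: "b \<in> interior I"
    and f'_int: "set_integrable lborel {m * a..m * b} f'"
    and conv: "alpha_m_convex_on \<alpha> m {m * a..b} (\<lambda>x. \<bar>f' x\<bar> powr q)"
    and \<theta>: "\<theta> > 0"
  shows "\<bar>f (m * (a + b) / 2)
           - Gamma (\<theta> + 1) * 2 powr (\<theta> - 1) / (m powr \<theta> * (b - a) powr \<theta>)
             * (RL_left \<theta> (m * (a + b) / 2) f (m * a) + RL_right \<theta> (m * (a + b) / 2) f (m * b))\<bar>
         \<le> m * (b - a) / 4 * (1 / (\<theta> + 1)) * (1 / (\<alpha> + \<theta> + 1)) powr (1 / q)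
           * (((\<theta> + 1) * \<bar>f' (m * (a + b) / 2)\<bar> powr q + \<alpha> * m * \<bar>f' a\<bar> powr q) powr (1 / q)
            + ((\<theta> + 1) * \<bar>f' (m * (a + b) / 2)\<bar> powr q + \<alpha> * m * \<bar>f' b\<bar> powr q) powr (1 / q))"
proof -
  have "0 \<le> m * a"
    using ma_in I_nonneg interior_subset by fastforce
  then have a: "0 \<le> a" and mb_le: "m * b \<le> b"
    using m ab by (auto simp: zero_le_mult_iff mult_left_le_one_le)
  have "is_interval (interior I)"
    using I_int by (simp add: is_interval_convex_1)
  then have "{m * a..b} \<subseteq> interior I"
    unfolding is_interval_1 using ma_in b_in by (meson atLeastAtMost_iff subsetI)
  then have deriv': "\<And>x. x \<in> {m * a..m * b} \<Longrightarrow> (f has_real_derivative f' x) (at x)"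
    using mb_le by (intro deriv) auto
  have mab: "m * a < m * b"
    using m ab by simp
  have mid: "m * (a + b) / 2 = (m * a + m * b) / 2" and len: "m * (b - a) = m * b - m * a"
    by (simp_all add: algebra_simps)
  have pow: "m powr \<theta> * (b - a) powr \<theta> = (m * b - m * a) powr \<theta>"
    using m ab by (simp add: powr_mult[symmetric] algebra_simps)
  have nonneg: "\<And>x. 0 \<le> \<bar>f' x\<bar> powr q"
    by simp
  show ?thesis
    using abs_midpoint_RL_le[OF mab \<theta> q \<alpha>(1) m(1) nonneg nonneg nonneg deriv'
        set_integrable_lborel_imp_absolutely_integrable[OF f'_int]
        alpha_m_convex_on_midpoint_bounds[OF conv m a ab]]
    by (simp only: mid len pow)
qed

end
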